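(* Let $0<\mu<L$ and $q:=\mu/L\in(0,1)$. For $\alpha,\beta,\gamma\in\mathbb{R}$ and $\lambda\in[\mu,L]$, let $$T_\lambda(\alpha,\beta,\gamma):=\begin{pmatrix}(1+\beta)(1-\alpha\lambda)-\gamma\alpha\lambda & -\beta(1-\alpha\lambda)\\ 1 & 0\end{pmatrix}\in\mathbb{R}^{2\times 2},$$ and define $\rho(\alpha,\beta,\gamma):=\max_{\mu\le\lambda\le L}\rho\big(T_\lambda(\alpha,\beta,\gamma)\big)$, where $\rho(\cdot)$ of a matrix denotes its spectral radius. Set $$\gamma^\star:=\frac{2+q-\sqrt{q^2+8q}}{2},\qquad \beta^\star:=\frac{(\gamma^\star)^2}{1-q}=\frac{\big(2+q-\sqrt{q^2+8q}\big)^2}{4(1-q)}.$$ Then $(\beta^\star,\gamma^\star)$ minimizes $(\beta,\gamma)\mapsto\rho(1/L,\beta,\gamma)$ over $\mathbb{R}^2$, with minimum value $$\rho(1/L,\beta^\star,\gamma^\star)=1-\sqrt{q(1+\gamma^\star)}=\gamma^\star .$$ Moreover, $$\frac{2+q-\sqrt{q^2+8q}}{2}\;\le\;1-\frac{2\sqrt{q}}{\sqrt{3+q}}\;\le\;1-\sqrt{q}.$$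
   Context: This concerns the iteration $y_{k+1}=x_k-\alpha\nabla f(x_k)$, $x_{k+1}=y_{k+1}+\beta(y_{k+1}-y_k)+\gamma(y_{k+1}-x_k)$ applied to a strongly convex quadratic $f(x)=\tfrac12 x^\top Qx-p^\top x$ with $Q$ symmetric positive definite with eigenvalues in $[\mu,L]$; writing $\xi_k=(x_k^\top,x_{k-1}^\top)^\top$, the error evolves as $\xi_{k+1}-\xi_*=T(\alpha,\beta,\gamma)(\xi_k-\xi_* )$, and for each eigenvalue $\lambda$ of $Q$ the corresponding $2\times2$ block is $T_\lambda(\alpha,\beta,\gamma)$ above. The method with $\alpha=1/L$, $\beta=\beta^\star$, $\gamma=\gamma^\star$ is called OGM-$q$; the quantities $1-\sqrt q$ and $1-2\sqrt q/\sqrt{3+q}$ are the corresponding worst-case spectral radii of two Nesterov-type variants with $\gamma=0$. *)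

theory Defs
  imports Complex_Main "Jordan_Normal_Form.Spectral_Radius"
begin

definition T_mat :: "real \<Rightarrow> real \<Rightarrow> real \<Rightarrow> real \<Rightarrow> real mat" where
  "T_mat lam \<alpha> \<beta> \<gamma> = mat_of_rows_list 2
     [[(1 + \<beta>) * (1 - \<alpha> * lam) - \<gamma> * \<alpha> * lam, - \<beta> * (1 - \<alpha> * lam)],
      [1, 0]]"

definition spec_rad_real :: "real mat \<Rightarrow> real" where
  "spec_rad_real A = spectral_radius (map_mat complex_of_real A)"

definition rho_worst :: "real \<Rightarrow> real \<Rightarrow> real \<Rightarrow> real \<Rightarrow> real \<Rightarrow> real" where
  "rho_worst \<mu> L \<alpha> \<beta> \<gamma> = (SUP lam\<in>{\<mu>..L}. spec_rad_real (T_mat lam \<alpha> \<beta> \<gamma>))"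

end

theory Submission
  imports Defs
begin

text \<open>
  For \<open>t = \<alpha>\<lambda>\<close> the matrix \<open>T\<^sub>\<lambda>(\<alpha>, \<beta>, \<gamma>)\<close> is the companion matrix of
  \<open>z\<^sup>2 - A z + B\<close> with \<open>A = (1 + \<beta>)(1 - t) - \<gamma> t\<close> and \<open>B = \<beta> (1 - t)\<close>, and its spectral
  radius is at most \<open>r\<close> exactly when \<open>B \<le> r\<^sup>2\<close> and \<open>r |A| \<le> r\<^sup>2 + B\<close> (Schur--Cohn).
  For \<open>\<alpha> = 1/L\<close> the parameter \<open>t\<close> ranges over \<open>[q, 1]\<close>. Let \<open>g = \<gamma>\<^sup>\<star>\<close>, the root in \<open>(0, 1)\<close>
  of \<open>g\<^sup>2 - (2 + q) g + 1 - q\<close>. At \<open>t = 1\<close> the matrix has eigenvalue \<open>-\<gamma>\<close>, so a worst-case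
  radius below \<open>g\<close> forces \<open>\<gamma> < g\<close>; but at \<open>t = q\<close> the characteristic polynomial at \<open>g\<close> equals
  \<open>g q (\<gamma> - g) + (B - g\<^sup>2)(1 - g)\<close>, which is then negative unless \<open>B \<ge> g\<^sup>2\<close>, and either way a
  root of modulus at least \<open>g\<close> exists. Conversely, for \<open>\<gamma> = g\<close> and \<open>\<beta> = g\<^sup>2/(1 - q)\<close> the two
  Schur--Cohn conditions with \<open>r = g\<close> hold for every \<open>t \<in> [q, 1]\<close>; the binding one equals
  \<open>2 g\<^sup>2 (t - q)/(1 - q) \<ge> 0\<close>.
\<close>

definition companion_mat :: "'a::comm_ring_1 \<Rightarrow> 'a \<Rightarrow> 'a mat" where
  "companion_mat a b = mat_of_rows_list 2 [[a, -b], [1, 0]]"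

lemma companion_mat_carrier: "companion_mat a b \<in> carrier_mat 2 2"
proof -
  have "length [[a, -b], [1, 0]] = 2" by simp
  then show ?thesis
    unfolding companion_mat_def mat_of_rows_list_def by (simp only:) (rule mat_carrier)
qed

lemma dim_companion_mat [simp]:
  "dim_row (companion_mat a b) = 2" "dim_col (companion_mat a b) = 2"
  using companion_mat_carrier by auto

lemma companion_mat_mult_vec:
  assumes "dim_vec v = 2"
  shows "(companion_mat a b *\<^sub>v v) $ 0 = a * v $ 0 - b * v $ 1"
    and "(companion_mat a b *\<^sub>v v) $ 1 = v $ 0"
  using assms by (auto simp: companion_mat_def mat_of_rows_list_def scalar_prod_def row_def
      numeral_2_eq_2 sum.atLeast0_lessThan_Suc)

lemma vec2_eqI:
  assumes "dim_vec v = 2" "dim_vec w = 2" "v $ 0 = w $ 0" "v $ 1 = w $ 1"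
  shows "v = w"
proof (rule eq_vecI)
  fix i assume "i < dim_vec w"
  then have "i = 0 \<or> i = 1" using assms by auto
  then show "v $ i = w $ i" using assms by auto
qed (use assms in auto)

lemma eigenvalue_companion_mat_iff:
  fixes a b z :: "'a::idom"
  shows "eigenvalue (companion_mat a b) z \<longleftrightarrow> z^2 - a * z + b = 0"
proof
  assume "eigenvalue (companion_mat a b) z"
  then obtain v where v: "v \<in> carrier_vec 2" "v \<noteq> 0\<^sub>v 2" "companion_mat a b *\<^sub>v v = z \<cdot>\<^sub>v v"
    unfolding eigenvalue_def eigenvector_def by auto
  have dim: "dim_vec v = 2" using v(1) by auto
  have row0: "a * v $ 0 - b * v $ 1 = z * v $ 0"
    using arg_cong[OF v(3), of "\<lambda>w. w $ 0"] companion_mat_mult_vec(1)[OF dim] dim by simp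
  have row1: "v $ 0 = z * v $ 1"
    using arg_cong[OF v(3), of "\<lambda>w. w $ 1"] companion_mat_mult_vec(2)[OF dim] dim by simp
  have "v $ 1 \<noteq> 0"
    using v(2) row1 dim by (auto intro: vec2_eqI)
  moreover have "(z^2 - a * z + b) * v $ 1 = 0"
    using row0 unfolding row1 by (simp add: algebra_simps power2_eq_square)
  ultimately show "z^2 - a * z + b = 0" by simp
next
  assume root: "z^2 - a * z + b = 0"
  define v where "v = vec_of_list [z, 1]"
  have dim: "dim_vec v = 2" and v0: "v $ 0 = z" and v1: "v $ 1 = 1"
    by (simp_all add: v_def vec_of_list_index)
  have "a * z - b = z * z"
    using root by (simp add: algebra_simps power2_eq_square)
  then have "(companion_mat a b *\<^sub>v v) $ 0 = (z \<cdot>\<^sub>v v) $ 0"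
    using companion_mat_mult_vec(1)[OF dim] v0 v1 dim by simp
  moreover have "(companion_mat a b *\<^sub>v v) $ 1 = (z \<cdot>\<^sub>v v) $ 1"
    using companion_mat_mult_vec(2)[OF dim] v0 v1 dim by simp
  ultimately have "companion_mat a b *\<^sub>v v = z \<cdot>\<^sub>v v"
    using dim by (intro vec2_eqI) simp_all
  moreover have "v \<noteq> 0\<^sub>v 2" using v1 by auto
  ultimately have "eigenvector (companion_mat a b) v z"
    using dim unfolding eigenvector_def by (auto intro: carrier_vecI)
  then show "eigenvalue (companion_mat a b) z" unfolding eigenvalue_def by blast
qed

lemma spectral_radius_companion_mat_le:
  assumes "\<And>z. z^2 - a * z + b = 0 \<Longrightarrow> cmod z \<le> r"
  shows "spectral_radius (companion_mat a b) \<le> r"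
proof -
  have "spectral_radius (companion_mat a b) \<in> norm ` spectrum (companion_mat a b)"
    by (rule spectral_radius_mem_max(1)[OF companion_mat_carrier]) simp
  then show ?thesis
    using assms eigenvalue_companion_mat_iff[of a b] unfolding spectrum_def by auto
qed

lemma cmod_le_spectral_radius_companion_mat:
  assumes "z^2 - a * z + b = 0"
  shows "cmod z \<le> spectral_radius (companion_mat a b)"
  using assms eigenvalue_companion_mat_iff
  by (intro spectral_radius_mem_max(2)[OF companion_mat_carrier]) (auto simp: spectrum_def)

lemma real_quadratic_pos_gt:
  fixes a b r x :: real
  assumes "0 < r" "b \<le> r^2" "r * \<bar>a\<bar> \<le> r^2 + b" "r < x"
  shows "0 < x^2 - a * x + b"
proof -
  have "r * \<bar>a\<bar> \<le> r * (2 * r)"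
    using assms(2,3) by (simp add: power2_eq_square)
  then have "\<bar>a\<bar> \<le> 2 * r" using assms(1) by simp
  then have "0 < (x - r) * (x + r - a)" using assms(4) by (intro mult_pos_pos) auto
  moreover have "0 \<le> r^2 - a * r + b"
    using assms(3) mult_right_mono[OF abs_ge_self[of a] less_imp_le[OF assms(1)]]
    by (simp add: mult.commute)
  moreover have "x^2 - a * x + b = (x - r) * (x + r - a) + (r^2 - a * r + b)"
    by (simp add: power2_eq_square algebra_simps)
  ultimately show ?thesis by linarith
qed

lemma real_quadratic_root_abs_le:
  fixes a b r x :: real
  assumes "0 < r" "b \<le> r^2" "r * \<bar>a\<bar> \<le> r^2 + b" and root: "x^2 - a * x + b = 0"
  shows "\<bar>x\<bar> \<le> r"
proof (rule ccontr)
  assume "\<not> \<bar>x\<bar> \<le> r"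
  then consider "r < x" | "r < - x" by linarith
  then show False
  proof cases
    case 1
    with real_quadratic_pos_gt[OF assms(1-3) 1] root show False by simp
  next
    case 2
    with real_quadratic_pos_gt[of r b "- a" "- x"] assms root show False by simp
  qed
qed

lemma quadratic_root_cmod_le:
  fixes a b r :: real and z :: complex
  assumes "0 < r" "b \<le> r^2" "r * \<bar>a\<bar> \<le> r^2 + b"
    and root: "z^2 - of_real a * z + of_real b = 0"
  shows "cmod z \<le> r"
proof -
  have re: "Re z ^ 2 - Im z ^ 2 - a * Re z + b = 0" and im: "Im z * (2 * Re z - a) = 0"
    using arg_cong[OF root, of Re] arg_cong[OF root, of Im]
    by (simp_all add: power2_eq_square algebra_simps)
  show ?thesis
  proof (cases "Im z = 0")
    case True
    then have "\<bar>Re z\<bar> \<le> r"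
      using re by (intro real_quadratic_root_abs_le[OF assms(1-3)]) simp
    then show ?thesis using True by (simp add: cmod_def)
  next
    case False
    then have "a = 2 * Re z" using im by simp
    then have "Re z ^ 2 + Im z ^ 2 = b"
      using re by (simp add: power2_eq_square algebra_simps)
    then have "cmod z ^ 2 = b" by (simp add: cmod_power2)
    then have "cmod z ^ 2 \<le> r ^ 2" using assms(2) by simp
    then show ?thesis using assms(1) by (simp add: power2_le_iff_abs_le)
  qed
qed

lemma quadratic_root_cmod_le_coeffs:
  fixes a b :: real and z :: complex
  assumes "z^2 - of_real a * z + of_real b = 0"
  shows "cmod z \<le> 1 + \<bar>a\<bar> + \<bar>b\<bar>"
proof (rule quadratic_root_cmod_le[OF _ _ _ assms])
  let ?r = "1 + \<bar>a\<bar> + \<bar>b\<bar>"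
  have "?r * \<bar>a\<bar> + \<bar>b\<bar> \<le> ?r * \<bar>a\<bar> + ?r * \<bar>b\<bar>"
    by (simp add: mult_le_cancel_right1)
  also have "\<dots> \<le> ?r ^ 2" by (simp add: power2_eq_square algebra_simps)
  finally have "?r * \<bar>a\<bar> + \<bar>b\<bar> \<le> ?r ^ 2" .
  moreover have "0 \<le> ?r * \<bar>a\<bar>" by simp
  ultimately show "?r * \<bar>a\<bar> \<le> ?r ^ 2 + b" "b \<le> ?r ^ 2" by linarith+
qed simp

lemma quadratic_root_cmod_ge:
  fixes a b g :: real
  assumes "0 < g" and "g^2 \<le> b \<or> g^2 - a * g + b \<le> 0"
  obtains z :: complex where "z^2 - of_real a * z + of_real b = 0" "g \<le> cmod z"
proof -
  define D where "D = a^2 - 4 * b"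
  show thesis
  proof (cases "D < 0")
    case True
    define z where "z = Complex (a / 2) (sqrt (- D) / 2)"
    have sq: "sqrt (- D) ^ 2 = - D" using True by simp
    have root: "z^2 - of_real a * z + of_real b = 0"
      unfolding z_def using sq by (simp add: complex_eq_iff power2_eq_square D_def field_simps)
    have "cmod z ^ 2 = b"
      unfolding z_def cmod_power2 using sq by (simp add: D_def power2_eq_square field_simps)
    moreover have "g^2 - a * g + b = (g - a / 2)^2 - D / 4"
      by (simp add: D_def power2_eq_square field_simps)
    then have "g^2 \<le> b" using assms(2) True zero_le_power2[of "g - a / 2"] by linarith
    ultimately have "g \<le> cmod z" using power2_le_imp_le[of g "cmod z"] by simp
    with root show thesis by (rule that)
  next
    case False
    define d where "d = sqrt D"
    have sq: "d ^ 2 = D" using False by (simp add: d_def)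
    define x1 where "x1 = (a + d) / 2"
    define x2 where "x2 = (a - d) / 2"
    have roots: "x1^2 - a * x1 + b = 0" "x2^2 - a * x2 + b = 0"
      unfolding x1_def x2_def using sq by (simp_all add: D_def power2_eq_square field_simps)
    have "g \<le> \<bar>x1\<bar> \<or> g \<le> \<bar>x2\<bar>"
    proof (rule ccontr)
      assume "\<not> (g \<le> \<bar>x1\<bar> \<or> g \<le> \<bar>x2\<bar>)"
      then have small: "\<bar>x1\<bar> < g" "\<bar>x2\<bar> < g" by auto
      have "b = x1 * x2" and "g^2 - a * g + b = (g - x1) * (g - x2)"
        unfolding x1_def x2_def using sq by (simp_all add: D_def power2_eq_square field_simps)
      moreover have "\<bar>x1\<bar> * \<bar>x2\<bar> < g * g" using small by (intro abs_mult_less)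
      moreover have "0 < (g - x1) * (g - x2)" using small by (intro mult_pos_pos) auto
      ultimately show False using assms(2) by (simp add: power2_eq_square abs_mult[symmetric])
    qed
    then obtain x where x: "x^2 - a * x + b = 0" "g \<le> \<bar>x\<bar>" using roots by blast
    show thesis
    proof (rule that)
      show "(complex_of_real x)^2 - of_real a * of_real x + of_real b = 0"
        using arg_cong[OF x(1), of complex_of_real] by simp
      show "g \<le> cmod (complex_of_real x)" using x(2) by simp
    qed
  qed
qed

definition T_radius :: "real \<Rightarrow> real \<Rightarrow> real \<Rightarrow> real" where
  "T_radius \<beta> \<gamma> t = spectral_radius
     (companion_mat (of_real ((1 + \<beta>) * (1 - t) - \<gamma> * t)) (of_real (\<beta> * (1 - t))))"

lemma map_mat_of_real_T_mat:
  "map_mat complex_of_real (T_mat lam \<alpha> \<beta> \<gamma>) =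
     companion_mat (of_real ((1 + \<beta>) * (1 - \<alpha> * lam) - \<gamma> * \<alpha> * lam)) (of_real (\<beta> * (1 - \<alpha> * lam)))"
  (is "?A = ?B")
proof (rule eq_matI)
  have dims: "dim_row (T_mat lam \<alpha> \<beta> \<gamma>) = 2" "dim_col (T_mat lam \<alpha> \<beta> \<gamma>) = 2"
    by (simp_all add: T_mat_def mat_of_rows_list_def)
  then show "dim_row ?A = dim_row ?B" "dim_col ?A = dim_col ?B" by simp_all
  fix i j assume "i < dim_row ?B" "j < dim_col ?B"
  then have "i = 0 \<or> i = 1" "j = 0 \<or> j = 1" by auto
  then show "?A $$ (i, j) = ?B $$ (i, j)"
    using dims by (auto simp: companion_mat_def T_mat_def mat_of_rows_list_def)
qed

lemma spec_rad_real_T_mat: "spec_rad_real (T_mat lam \<alpha> \<beta> \<gamma>) = T_radius \<beta> \<gamma> (\<alpha> * lam)"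
  unfolding spec_rad_real_def map_mat_of_real_T_mat T_radius_def by (simp add: mult.assoc)

lemma rho_worst_inverse_L:
  assumes "0 < L"
  shows "rho_worst \<mu> L (1 / L) \<beta> \<gamma> = (SUP t\<in>{\<mu> / L..1}. T_radius \<beta> \<gamma> t)"
proof -
  have "(*) (1 / L) ` {\<mu>..L} = {\<mu> / L..1}" using assms by simp
  then show ?thesis
    unfolding rho_worst_def spec_rad_real_T_mat image_image[symmetric] by simp
qed

lemma T_radius_le:
  assumes "0 \<le> t" "t \<le> 1"
  shows "T_radius \<beta> \<gamma> t \<le> 1 + \<bar>1 + \<beta>\<bar> + \<bar>\<gamma>\<bar> + \<bar>\<beta>\<bar>"
  unfolding T_radius_def
proof (rule spectral_radius_companion_mat_le)
  fix z :: complex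
  assume "z^2 - of_real ((1 + \<beta>) * (1 - t) - \<gamma> * t) * z + of_real (\<beta> * (1 - t)) = 0"
  note quadratic_root_cmod_le_coeffs[OF this]
  moreover have "\<bar>(1 + \<beta>) * (1 - t)\<bar> \<le> \<bar>1 + \<beta>\<bar>" "\<bar>\<gamma> * t\<bar> \<le> \<bar>\<gamma>\<bar>" "\<bar>\<beta> * (1 - t)\<bar> \<le> \<bar>\<beta>\<bar>"
    using assms by (simp_all add: abs_mult mult_left_le)
  ultimately show "cmod z \<le> 1 + \<bar>1 + \<beta>\<bar> + \<bar>\<gamma>\<bar> + \<bar>\<beta>\<bar>" by linarith
qed

lemma bdd_above_T_radius:
  assumes "0 \<le> q"
  shows "bdd_above (T_radius \<beta> \<gamma> ` {q..1})"
  using assms T_radius_le by (intro bdd_aboveI2[of _ _ "1 + \<bar>1 + \<beta>\<bar> + \<bar>\<gamma>\<bar> + \<bar>\<beta>\<bar>"]) auto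

lemma abs_le_T_radius_one: "\<bar>\<gamma>\<bar> \<le> T_radius \<beta> \<gamma> 1"
  using cmod_le_spectral_radius_companion_mat[of "- of_real \<gamma>" "- of_real \<gamma>" 0]
  by (simp add: T_radius_def power2_eq_square)

lemma T_radius_endpoint_ge:
  assumes "0 < q" "0 < g" "g < 1" and root: "g^2 - (2 + q) * g + (1 - q) = 0"
  shows "g \<le> T_radius \<beta> \<gamma> q \<or> g \<le> T_radius \<beta> \<gamma> 1"
proof (rule ccontr)
  define A where "A = (1 + \<beta>) * (1 - q) - \<gamma> * q"
  define B where "B = \<beta> * (1 - q)"
  assume "\<not> ?thesis"
  then have small_q: "T_radius \<beta> \<gamma> q < g" and "T_radius \<beta> \<gamma> 1 < g" by auto
  then have "\<gamma> < g" using abs_le_T_radius_one[of \<gamma> \<beta>] by linarith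
  have "\<not> (g^2 \<le> B \<or> g^2 - A * g + B \<le> 0)"
  proof
    assume "g^2 \<le> B \<or> g^2 - A * g + B \<le> 0"
    with assms(2) obtain z :: complex where "z^2 - of_real A * z + of_real B = 0" "g \<le> cmod z"
      by (rule quadratic_root_cmod_ge)
    then have "g \<le> T_radius \<beta> \<gamma> q"
      unfolding T_radius_def A_def B_def using cmod_le_spectral_radius_companion_mat order_trans by blast
    with small_q show False by simp
  qed
  moreover have "g^2 - A * g + B = g * q * (\<gamma> - g) + (B - g^2) * (1 - g) - g * (g^2 - (2 + q) * g + (1 - q))"
    by (simp add: A_def B_def power2_eq_square algebra_simps)
  then have "g^2 - A * g + B = g * q * (\<gamma> - g) + (B - g^2) * (1 - g)"
    using root by simp
  moreover have "g * q * (\<gamma> - g) < 0"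
    using assms(1,2) \<open>\<gamma> < g\<close> by (simp add: mult_pos_neg)
  ultimately show False
    using assms(3) mult_neg_pos[of "B - g^2" "1 - g"] by linarith
qed

lemma T_radius_optimal_le:
  assumes "q < 1" "0 < g" "g < 1" and root: "g^2 - (2 + q) * g + (1 - q) = 0"
    and "q \<le> t" "t \<le> 1"
  shows "T_radius (g^2 / (1 - q)) g t \<le> g"
proof -
  define \<beta> where "\<beta> = g^2 / (1 - q)"
  define A where "A = (1 + \<beta>) * (1 - t) - g * t"
  define B where "B = \<beta> * (1 - t)"
  have \<beta>: "\<beta> * (1 - q) = g^2" "0 \<le> \<beta>" using assms(1) by (simp_all add: \<beta>_def)
  have "B \<le> \<beta> * (1 - q)"
    unfolding B_def using \<beta>(2) assms(5) by (intro mult_left_mono) auto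
  then have B_le: "B \<le> g^2" using \<beta>(1) by simp
  have "g^2 + B + g * A = g^2 * (1 - t) + (1 - t) * (\<beta> + g + g * \<beta>)"
    by (simp add: A_def B_def power2_eq_square algebra_simps)
  moreover have "0 \<le> (1 - t) * (\<beta> + g + g * \<beta>)"
    using assms(2,6) \<beta>(2) by simp
  ultimately have lower: "0 \<le> g^2 + B + g * A" using assms(6) by simp
  have "(1 - q) * (g^2 + B - g * A)
      = (1 - q) * g^2 * (1 + t) + (1 - t) * (1 - g) * (\<beta> * (1 - q)) - (1 - t) * g * (1 - q)"
    by (simp add: A_def B_def algebra_simps power2_eq_square)
  also have "\<dots> = 2 * g^2 * (t - q) - (1 - t) * g * (g^2 - (2 + q) * g + (1 - q))"
    unfolding \<beta>(1) by (simp add: algebra_simps power2_eq_square)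
  finally have "(1 - q) * (g^2 + B - g * A) = 2 * g^2 * (t - q)"
    using root by simp
  then have "0 \<le> (1 - q) * (g^2 + B - g * A)" using assms(5) by simp
  then have upper: "0 \<le> g^2 + B - g * A"
    using assms(1) by (simp add: zero_le_mult_iff)
  have "g * \<bar>A\<bar> \<le> g^2 + B"
    using lower upper assms(2) by (simp add: abs_if)
  then show ?thesis
    unfolding T_radius_def \<beta>_def[symmetric] A_def[symmetric] B_def[symmetric]
    using quadratic_root_cmod_le[OF assms(2) B_le] spectral_radius_companion_mat_le by blast
qed

lemma SUP_T_radius_ge:
  assumes "0 < q" "q < 1" "0 < g" "g < 1" and "g^2 - (2 + q) * g + (1 - q) = 0"
  shows "g \<le> (SUP t\<in>{q..1}. T_radius \<beta> \<gamma> t)"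
proof -
  have "T_radius \<beta> \<gamma> t \<le> (SUP t\<in>{q..1}. T_radius \<beta> \<gamma> t)" if "t \<in> {q..1}" for t
    using that assms(1) by (intro cSUP_upper bdd_above_T_radius) auto
  moreover have "q \<in> {q..1}" "1 \<in> {q..1}" using assms(2) by auto
  ultimately show ?thesis
    using T_radius_endpoint_ge[OF assms(1,3-5), of \<beta> \<gamma>] by (meson order_trans)
qed

lemma SUP_T_radius_optimal:
  assumes "0 < q" "q < 1" "0 < g" "g < 1" and "g^2 - (2 + q) * g + (1 - q) = 0"
  shows "(SUP t\<in>{q..1}. T_radius (g^2 / (1 - q)) g t) = g"
proof (rule antisym)
  show "(SUP t\<in>{q..1}. T_radius (g^2 / (1 - q)) g t) \<le> g"
    using assms T_radius_optimal_le by (intro cSUP_least) auto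
qed (rule SUP_T_radius_ge[OF assms])

lemma optimal_gamma_root:
  fixes q :: real
  assumes "0 < q" "q < 1"
  defines "g \<equiv> (2 + q - sqrt (q^2 + 8 * q)) / 2"
  shows "g^2 - (2 + q) * g + (1 - q) = 0" "0 < g" "g < 1"
proof -
  define s where "s = sqrt (q^2 + 8 * q)"
  have s2: "s^2 = q^2 + 8 * q" and s0: "0 \<le> s" using assms(1) by (simp_all add: s_def)
  have g: "g = (2 + q - s) / 2" by (simp add: g_def s_def)
  show "g^2 - (2 + q) * g + (1 - q) = 0"
    unfolding g using s2 by (simp add: power2_eq_square field_simps)
  have "s^2 < (2 + q)^2" "q^2 < s^2" using s2 assms(1,2) by (simp_all add: power2_eq_square algebra_simps)
  then have "s < 2 + q" "q < s" using s0 assms(1) by (auto intro: power_less_imp_less_base)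
  then show "0 < g" "g < 1" unfolding g by simp_all
qed

lemma one_minus_sqrt_eq_optimal_gamma:
  fixes q g :: real
  assumes "g^2 - (2 + q) * g + (1 - q) = 0" "g < 1"
  shows "1 - sqrt (q * (1 + g)) = g"
proof -
  have "q * (1 + g) = (1 - g)^2"
    using assms(1) by (simp add: power2_eq_square algebra_simps)
  then show ?thesis using assms(2) by simp
qed

lemma rate_le_one_minus_sqrt:
  fixes q :: real
  assumes "0 \<le> q" "q \<le> 1"
  shows "1 - 2 * sqrt q / sqrt (3 + q) \<le> 1 - sqrt q"
proof -
  have "sqrt (3 + q) \<le> 2"
    using real_sqrt_le_mono[of "3 + q" 4] assms(2) by simp
  then have "sqrt q * sqrt (3 + q) \<le> sqrt q * 2" using assms(1) by (intro mult_left_mono) auto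
  moreover have "0 < sqrt (3 + q)" using assms(1) by simp
  ultimately have "sqrt q \<le> 2 * sqrt q / sqrt (3 + q)" by (simp add: le_divide_eq mult.commute)
  then show ?thesis by simp
qed

lemma optimal_gamma_le_rate:
  fixes q :: real
  assumes "0 < q" "q < 1"
  shows "(2 + q - sqrt (q^2 + 8 * q)) / 2 \<le> 1 - 2 * sqrt q / sqrt (3 + q)"
proof -
  define s where "s = sqrt (q^2 + 8 * q)"
  have s2: "s^2 = q^2 + 8 * q" and "0 \<le> s" using assms(1) by (simp_all add: s_def)
  have "q^2 < s^2" using s2 assms(1) by simp
  then have "q < s" using \<open>0 \<le> s\<close> by (rule power_less_imp_less_base)
  have "(s * (3 + q))^2 \<le> (q^2 + 7 * q + 4)^2"
  proof -
    have "(q^2 + 7 * q + 4)^2 - (s * (3 + q))^2 = 16 * (1 - q)"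
      unfolding power_mult_distrib s2 by (simp add: power2_eq_square algebra_simps)
    then have "0 \<le> (q^2 + 7 * q + 4)^2 - (s * (3 + q))^2" using assms(2) by simp
    then show ?thesis by simp
  qed
  then have "s * (3 + q) \<le> q^2 + 7 * q + 4"
    by (rule power2_le_imp_le) (use assms(1) in simp)
  then have "8 \<le> (q + 4 - s) * (3 + q)" by (simp add: power2_eq_square algebra_simps)
  then have "q * 8 \<le> q * ((q + 4 - s) * (3 + q))"
    using assms(1) by (intro mult_left_mono) auto
  moreover have "((s - q) / 2)^2 * (3 + q) = q * ((q + 4 - s) * (3 + q)) / 2"
    using s2 by (simp add: power2_eq_square field_simps)
  ultimately have "4 * q \<le> ((s - q) / 2)^2 * (3 + q)" by linarith
  then have "4 * q / (3 + q) \<le> ((s - q) / 2)^2"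
    using assms(1) by (subst pos_divide_le_eq) auto
  then have "sqrt (4 * q / (3 + q)) \<le> sqrt (((s - q) / 2)^2)"
    by (rule real_sqrt_le_mono)
  then have "sqrt (4 * q / (3 + q)) \<le> (s - q) / 2"
    using \<open>q < s\<close> by simp
  moreover have "sqrt (4 * q / (3 + q)) = 2 * sqrt q / sqrt (3 + q)"
    by (simp add: real_sqrt_divide real_sqrt_mult)
  ultimately show ?thesis by (simp add: s_def)
qed

theorem mainTheorem1:
  fixes \<mu> L :: real
  assumes "0 < \<mu>" and "\<mu> < L"
  defines "q \<equiv> \<mu> / L"
  defines "\<gamma>s \<equiv> (2 + q - sqrt (q^2 + 8 * q)) / 2"
  defines "\<beta>s \<equiv> \<gamma>s^2 / (1 - q)"
  shows "(\<forall>\<beta> \<gamma>. rho_worst \<mu> L (1 / L) \<beta>s \<gamma>s \<le> rho_worst \<mu> L (1 / L) \<beta> \<gamma>)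
     \<and> rho_worst \<mu> L (1 / L) \<beta>s \<gamma>s = 1 - sqrt (q * (1 + \<gamma>s))
     \<and> 1 - sqrt (q * (1 + \<gamma>s)) = \<gamma>s
     \<and> \<beta>s = (2 + q - sqrt (q^2 + 8 * q))^2 / (4 * (1 - q))
     \<and> (2 + q - sqrt (q^2 + 8 * q)) / 2 \<le> 1 - 2 * sqrt q / sqrt (3 + q)
     \<and> 1 - 2 * sqrt q / sqrt (3 + q) \<le> 1 - sqrt q"
proof -
  have "0 < L" using assms by linarith
  then have q: "0 < q" "q < 1" using assms by (simp_all add: q_def)
  note root = optimal_gamma_root[OF q, folded \<gamma>s_def]
  have rho: "rho_worst \<mu> L (1 / L) \<beta> \<gamma> = (SUP t\<in>{q..1}. T_radius \<beta> \<gamma> t)" for \<beta> \<gamma>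
    using rho_worst_inverse_L[OF \<open>0 < L\<close>] by (simp add: q_def)
  have optimum: "rho_worst \<mu> L (1 / L) \<beta>s \<gamma>s = \<gamma>s"
    unfolding rho \<beta>s_def using SUP_T_radius_optimal[OF q root(2,3,1)] .
  have "1 - sqrt (q * (1 + \<gamma>s)) = \<gamma>s"
    using one_minus_sqrt_eq_optimal_gamma[OF root(1,3)] .
  moreover have "\<gamma>s \<le> rho_worst \<mu> L (1 / L) \<beta> \<gamma>" for \<beta> \<gamma>
    unfolding rho using SUP_T_radius_ge[OF q root(2,3,1)] .
  moreover have "\<beta>s = (2 + q - sqrt (q^2 + 8 * q))^2 / (4 * (1 - q))"
    by (simp add: \<beta>s_def \<gamma>s_def power_divide)
  ultimately show ?thesis
    using optimum optimal_gamma_le_rate[OF q] rate_le_one_minus_sqrt q by simp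
qed

end
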